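(* Let $d\ge 1$, $\delta>0$, $N\ge 1$, let $\varphi_1,\dots,\varphi_N\in\mathbb{S}^{d-1}$ be arbitrary (deterministic) unit vectors, and let $\psi\in\mathbb{S}^{d-1}$. Let $\epsilon_1,\dots,\epsilon_N$ be i.i.d. random variables uniformly distributed on $[-\delta,\delta]$. Define $$P_N=\bigcap_{n=1}^N\{u\in\mathbb{R}^d:\ |\langle u,\varphi_n\rangle-\epsilon_n|\le\delta\},\qquad R_N(\psi)=\sup\{r\ge 0:\ r\psi\in P_N\}\in[0,\infty].$$ Then $$\mathbb{E}|R_N(\psi)|^2\ \ge\ \frac{8\delta^2}{(N+1)(N+2)}.$$
   Context: $P_N$ is the error polytope of consistent reconstruction: if $q_n=\langle x,\varphi_n\rangle+\epsilon_n$ and $\tilde x$ satisfies $|\langle\tilde x,\varphi_n\rangle-q_n|\le\delta$ for all $n$, then $x-\tilde x\in P_N$. $R_N(\psi)$ is the radial size of $P_N$ in the direction $\psi$. *)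

theory Defs
  imports "HOL-Probability.Probability"
begin

definition error_polytope :: "nat \<Rightarrow> (nat \<Rightarrow> 'a::euclidean_space) \<Rightarrow> real \<Rightarrow> (nat \<Rightarrow> real) \<Rightarrow> 'a set" where
  "error_polytope N \<phi> \<delta> e = (\<Inter>n\<in>{1..N}. {u. \<bar>inner u (\<phi> n) - e n\<bar> \<le> \<delta>})"

definition radial_size :: "nat \<Rightarrow> (nat \<Rightarrow> 'a::euclidean_space) \<Rightarrow> real \<Rightarrow> (nat \<Rightarrow> real) \<Rightarrow> 'a \<Rightarrow> ennreal" where
  "radial_size N \<phi> \<delta> e \<psi> = (SUP r\<in>{r::real. 0 \<le> r \<and> r *\<^sub>R \<psi> \<in> error_polytope N \<phi> \<delta> e}. ennreal r)"

end

theory Submission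
  imports Defs
begin

text \<open>On the event that all \<open>\<bar>\<epsilon>\<^sub>n\<bar> \<le> \<delta>\<close>, the ray \<open>r\<psi>\<close> stays in \<open>P\<^sub>N\<close> up to radius
  \<open>Z = min\<^sub>n (\<delta> \<plusminus> \<epsilon>\<^sub>n)\<close>, the sign being that of \<open>\<langle>\<psi>, \<phi>\<^sub>n\<rangle>\<close>; this is exact when every
  \<open>\<phi>\<^sub>n = \<plusminus>\<psi>\<close>. The variables \<open>\<delta> \<plusminus> \<epsilon>\<^sub>n\<close> are independent and uniform on \<open>[0, 2\<delta>]\<close>, so
  \<open>P(Z \<ge> s) = (1 - s/2\<delta>)\<^sup>N\<close>, and the layer-cake formula \<open>E Z\<^sup>2 = \<integral>\<^sub>0\<^sup>\<infinity> 2s P(Z \<ge> s) ds\<close> turns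
  this into the Beta integral of \<open>2s (1 - s/2\<delta>)\<^sup>N\<close> over \<open>[0, 2\<delta>]\<close>, which is \<open>8\<delta>\<^sup>2/((N+1)(N+2))\<close>.\<close>

lemma nn_integral_square_layer:
  fixes Z :: "'w \<Rightarrow> real"
  assumes "sigma_finite_measure M" and [measurable]: "Z \<in> borel_measurable M"
    and Z_nonneg: "\<And>w. 0 \<le> Z w"
  shows "(\<integral>\<^sup>+ w. ennreal ((Z w)\<^sup>2) \<partial>M) =
    (\<integral>\<^sup>+ s. ennreal (2 * s) * emeasure M {w\<in>space M. s \<le> Z w} * indicator {0..} s \<partial>lborel)"
proof -
  interpret pair_sigma_finite M lborel
    using assms(1) by (simp add: pair_sigma_finite_def lborel.sigma_finite_measure_axioms)
  have square_eq: "ennreal ((Z w)\<^sup>2) = (\<integral>\<^sup>+ s. ennreal (2 * s) * indicator {0..Z w} s \<partial>lborel)" for w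
    by (subst nn_integral_FTC_Icc[where F="\<lambda>x. x\<^sup>2"])
       (auto intro!: derivative_eq_intros simp: Z_nonneg)
  have "(\<lambda>(w, s). ennreal (2 * s) * indicator {0..Z w} s) =
      (\<lambda>p. ennreal (2 * snd p) * indicator {p. 0 \<le> snd p \<and> snd p \<le> Z (fst p)} p)"
    by (auto simp: fun_eq_iff split: split_indicator)
  then have joint_measurable:
    "(\<lambda>(w, s). ennreal (2 * s) * indicator {0..Z w} s) \<in> borel_measurable (M \<Otimes>\<^sub>M lborel)"
    by simp
  have section_eq: "(\<integral>\<^sup>+ w. ennreal (2 * s) * indicator {0..Z w} s \<partial>M) =
      ennreal (2 * s) * emeasure M {w\<in>space M. s \<le> Z w} * indicator {0..} s" for s
  proof -
    have "(\<integral>\<^sup>+ w. ennreal (2 * s) * indicator {0..Z w} s \<partial>M) =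
        (\<integral>\<^sup>+ w. (ennreal (2 * s) * indicator {0..} s) * indicator {w\<in>space M. s \<le> Z w} w \<partial>M)"
      by (rule nn_integral_cong) (auto split: split_indicator)
    also have "\<dots> = ennreal (2 * s) * indicator {0..} s * emeasure M {w\<in>space M. s \<le> Z w}"
      by (rule nn_integral_cmult_indicator) measurable
    finally show ?thesis by (simp add: ac_simps)
  qed
  have "(\<integral>\<^sup>+ w. ennreal ((Z w)\<^sup>2) \<partial>M) =
      (\<integral>\<^sup>+ w. (\<integral>\<^sup>+ s. ennreal (2 * s) * indicator {0..Z w} s \<partial>lborel) \<partial>M)"
    by (simp add: square_eq)
  also have "\<dots> = (\<integral>\<^sup>+ s. (\<integral>\<^sup>+ w. ennreal (2 * s) * indicator {0..Z w} s \<partial>M) \<partial>lborel)"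
    by (rule Fubini'[OF joint_measurable, symmetric])
  finally show ?thesis by (simp add: section_eq)
qed

lemma has_real_derivative_power_div:
  fixes c x :: real and k :: nat
  assumes "c \<noteq> 0"
  shows "((\<lambda>x. (1 - x / c) ^ Suc k / (real k + 1)) has_real_derivative - ((1 - x / c) ^ k / c)) (at x)"
proof -
  have "((\<lambda>x. 1 - x / c) has_real_derivative - 1 / c) (at x)"
    using assms by (auto intro!: derivative_eq_intros)
  then have "((\<lambda>x. (1 - x / c) ^ Suc k) has_real_derivative (1 + real k) * (- 1 / c * (1 - x / c) ^ k)) (at x)"
    by (rule DERIV_power_Suc)
  then have "((\<lambda>x. (1 - x / c) ^ Suc k / (real k + 1)) has_real_derivative
      (1 + real k) * (- 1 / c * (1 - x / c) ^ k) / (real k + 1)) (at x)"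
    by (rule DERIV_cdivide)
  then show ?thesis by (simp add: add.commute)
qed

lemma nn_integral_beta_moment:
  fixes c :: real and N :: nat
  assumes "c > 0"
  shows "(\<integral>\<^sup>+ s. ennreal (2 * s * (1 - s / c) ^ N) * indicator {0..c} s \<partial>lborel)
           = ennreal (2 * c\<^sup>2 / ((real N + 1) * (real N + 2)))"
proof -
  define F where "F x = - 2 * c\<^sup>2 *
      ((1 - x / c) ^ Suc N / (real N + 1) - (1 - x / c) ^ Suc (Suc N) / (real (Suc N) + 1))" for x
  have F_deriv: "(F has_real_derivative 2 * x * (1 - x / c) ^ N) (at x)" for x
  proof -
    have "(F has_real_derivative - 2 * c\<^sup>2 * (- ((1 - x / c) ^ N / c) - - ((1 - x / c) ^ Suc N / c))) (at x)"
      unfolding F_def using assms by (intro DERIV_cmult DERIV_diff has_real_derivative_power_div) auto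
    moreover have "- 2 * c\<^sup>2 * (- ((1 - x / c) ^ N / c) - - ((1 - x / c) ^ Suc N / c)) = 2 * x * (1 - x / c) ^ N"
      using assms by (simp add: power2_eq_square field_simps)
    ultimately show ?thesis by (rule DERIV_cong)
  qed
  have "(\<integral>\<^sup>+ s. ennreal (2 * s * (1 - s / c) ^ N) * indicator {0..c} s \<partial>lborel) = ennreal (F c - F 0)"
    using assms by (intro nn_integral_FTC_Icc F_deriv) (auto simp: field_simps)
  also have "F c - F 0 = 2 * c\<^sup>2 / ((real N + 1) * (real N + 2))"
    using assms by (simp add: F_def field_simps)
  finally show ?thesis .
qed

lemma scaled_mem_slab:
  fixes a e r \<delta> :: real
  assumes "\<bar>a\<bar> \<le> 1" "\<bar>e\<bar> \<le> \<delta>" "0 \<le> r" "r \<le> \<delta> + (if a < 0 then - 1 else 1) * e"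
  shows "\<bar>r * a - e\<bar> \<le> \<delta>"
proof -
  have "\<bar>r * a\<bar> \<le> r"
    using assms(1,3) mult_left_mono[of "\<bar>a\<bar>" 1 r] by (simp add: abs_mult)
  moreover have "a < 0 \<Longrightarrow> r * a \<le> 0" "\<not> a < 0 \<Longrightarrow> 0 \<le> r * a"
    using assms(3) by (simp_all add: mult_nonneg_nonpos)
  ultimately show ?thesis
    using assms(2,4) by (cases "a < 0") (auto simp: abs_le_iff)
qed

definition radial_lower_bound :: "nat \<Rightarrow> (nat \<Rightarrow> 'a::euclidean_space) \<Rightarrow> real \<Rightarrow> (nat \<Rightarrow> real) \<Rightarrow> 'a \<Rightarrow> real"
  where "radial_lower_bound N \<phi> \<delta> e \<psi> =
    (if \<forall>n\<in>{1..N}. \<bar>e n\<bar> \<le> \<delta>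
     then Min ((\<lambda>n. \<delta> + (if inner \<psi> (\<phi> n) < 0 then - 1 else 1) * e n) ` {1..N})
     else 0)"

lemma radial_lower_bound_nonneg:
  assumes "N \<ge> 1"
  shows "0 \<le> radial_lower_bound N \<phi> \<delta> e \<psi>"
proof -
  have "0 \<le> \<delta> + (if inner \<psi> (\<phi> n) < 0 then - 1 else 1) * e n" if "\<bar>e n\<bar> \<le> \<delta>" for n
    using that by (auto simp: abs_le_iff)
  then show ?thesis
    using assms by (auto simp: radial_lower_bound_def)
qed

lemma radial_lower_bound_le_radial_size:
  assumes "N \<ge> 1" "\<forall>n\<in>{1..N}. norm (\<phi> n) \<le> 1" "norm \<psi> \<le> 1"
  shows "ennreal (radial_lower_bound N \<phi> \<delta> e \<psi>) \<le> radial_size N \<phi> \<delta> e \<psi>"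
proof (cases "\<forall>n\<in>{1..N}. \<bar>e n\<bar> \<le> \<delta>")
  case admissible: True
  define r where "r = radial_lower_bound N \<phi> \<delta> e \<psi>"
  have "\<bar>r * inner \<psi> (\<phi> n) - e n\<bar> \<le> \<delta>" if n: "n \<in> {1..N}" for n
  proof (rule scaled_mem_slab)
    have "\<bar>inner \<psi> (\<phi> n)\<bar> \<le> norm \<psi> * norm (\<phi> n)"
      by (rule Cauchy_Schwarz_ineq2)
    also have "\<dots> \<le> 1"
      using assms(2,3) n by (simp add: mult_le_one)
    finally show "\<bar>inner \<psi> (\<phi> n)\<bar> \<le> 1" .
    show "\<bar>e n\<bar> \<le> \<delta>" "0 \<le> r"
      using admissible n assms(1) by (auto simp: r_def radial_lower_bound_nonneg)
    show "r \<le> \<delta> + (if inner \<psi> (\<phi> n) < 0 then - 1 else 1) * e n"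
      using admissible n by (auto simp: r_def radial_lower_bound_def)
  qed
  then have "r *\<^sub>R \<psi> \<in> error_polytope N \<phi> \<delta> e"
    by (simp add: error_polytope_def)
  then show ?thesis
    unfolding radial_size_def r_def
    using assms(1) by (intro SUP_upper) (auto simp: radial_lower_bound_nonneg)
qed (auto simp: radial_lower_bound_def)

lemma borel_measurable_radial_lower_bound:
  fixes e :: "nat \<Rightarrow> 'w \<Rightarrow> real"
  assumes "\<And>n. n \<in> {1..N} \<Longrightarrow> e n \<in> borel_measurable M"
  shows "(\<lambda>w. radial_lower_bound N \<phi> \<delta> (\<lambda>n. e n w) \<psi>) \<in> borel_measurable M"
proof -
  have "{w\<in>space M. \<forall>n\<in>{1..N}. \<bar>e n w\<bar> \<le> \<delta>} \<in> sets M"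
    using assms by (intro sets.sets_Collect_finite_All) (auto intro!: borel_measurable_le)
  then show ?thesis
    unfolding radial_lower_bound_def
    using assms by (intro measurable_If borel_measurable_Min) auto
qed

lemma (in prob_space) emeasure_radial_lower_bound_ge:
  fixes \<epsilon> :: "nat \<Rightarrow> 'a \<Rightarrow> real" and \<phi> :: "nat \<Rightarrow> 'b::euclidean_space"
  assumes "\<delta> > 0" "N \<ge> 1"
    and indep: "indep_vars (\<lambda>_. borel) \<epsilon> {1..N}"
    and uniform: "\<forall>n\<in>{1..N}. distr M borel (\<epsilon> n) = uniform_measure lborel {-\<delta>..\<delta>}"
    and s: "0 \<le> s" "s \<le> 2 * \<delta>"
  shows "ennreal ((1 - s / (2 * \<delta>)) ^ N)
           \<le> emeasure M {w\<in>space M. s \<le> radial_lower_bound N \<phi> \<delta> (\<lambda>n. \<epsilon> n w) \<psi>}"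
proof -
  have \<epsilon>_measurable: "\<epsilon> n \<in> borel_measurable M" if "n \<in> {1..N}" for n
    using indep that by (auto simp: indep_vars_def)
  define B where "B n = (if inner \<psi> (\<phi> n) < 0 then {-\<delta>..\<delta> - s} else {s - \<delta>..\<delta>})" for n
  have B_in_slab: "\<bar>x\<bar> \<le> \<delta> \<and> s \<le> \<delta> + (if inner \<psi> (\<phi> n) < 0 then - 1 else 1) * x" if "x \<in> B n" for n x
    using that s by (auto simp: B_def split: if_splits)
  have prob_B: "prob (\<epsilon> n -` B n \<inter> space M) = 1 - s / (2 * \<delta>)" if n: "n \<in> {1..N}" for n
  proof -
    have "prob (\<epsilon> n -` B n \<inter> space M) = measure (uniform_measure lborel {-\<delta>..\<delta>}) (B n)"
      using uniform n \<epsilon>_measurable[OF n] by (simp add: measure_distr[symmetric] B_def)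
    also have "\<dots> = (2 * \<delta> - s) / (2 * \<delta>)"
      using s assms(1) by (simp add: B_def Int_absorb1)
    finally show ?thesis
      using assms(1) by (simp add: field_simps)
  qed
  have "(\<Inter>n\<in>{1..N}. \<epsilon> n -` B n \<inter> space M)
      \<subseteq> {w\<in>space M. s \<le> radial_lower_bound N \<phi> \<delta> (\<lambda>n. \<epsilon> n w) \<psi>}"
  proof
    fix w assume "w \<in> (\<Inter>n\<in>{1..N}. \<epsilon> n -` B n \<inter> space M)"
    then have "w \<in> space M" and in_B: "\<And>n. n \<in> {1..N} \<Longrightarrow> \<epsilon> n w \<in> B n"
      using assms(2) by auto
    then show "w \<in> {w\<in>space M. s \<le> radial_lower_bound N \<phi> \<delta> (\<lambda>n. \<epsilon> n w) \<psi>}"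
      using B_in_slab[OF in_B] assms(2) by (auto simp: radial_lower_bound_def)
  qed
  then have "emeasure M (\<Inter>n\<in>{1..N}. \<epsilon> n -` B n \<inter> space M)
      \<le> emeasure M {w\<in>space M. s \<le> radial_lower_bound N \<phi> \<delta> (\<lambda>n. \<epsilon> n w) \<psi>}"
  proof (rule emeasure_mono)
    have [measurable]: "(\<lambda>w. radial_lower_bound N \<phi> \<delta> (\<lambda>n. \<epsilon> n w) \<psi>) \<in> borel_measurable M"
      using \<epsilon>_measurable by (rule borel_measurable_radial_lower_bound)
    show "{w\<in>space M. s \<le> radial_lower_bound N \<phi> \<delta> (\<lambda>n. \<epsilon> n w) \<psi>} \<in> sets M"
      by measurable
  qed
  moreover have "prob (\<Inter>n\<in>{1..N}. \<epsilon> n -` B n \<inter> space M) = (\<Prod>n\<in>{1..N}. prob (\<epsilon> n -` B n \<inter> space M))"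
    using assms(2) by (intro indep_varsD[OF indep]) (auto simp: B_def)
  ultimately show ?thesis
    using prob_B by (simp add: emeasure_eq_measure)
qed

lemma (in prob_space) nn_integral_radial_lower_bound_square_ge:
  fixes \<epsilon> :: "nat \<Rightarrow> 'a \<Rightarrow> real" and \<phi> :: "nat \<Rightarrow> 'b::euclidean_space"
  assumes "\<delta> > 0" "N \<ge> 1"
    and "indep_vars (\<lambda>_. borel) \<epsilon> {1..N}"
    and "\<forall>n\<in>{1..N}. distr M borel (\<epsilon> n) = uniform_measure lborel {-\<delta>..\<delta>}"
  shows "ennreal (8 * \<delta>\<^sup>2 / ((real N + 1) * (real N + 2)))
           \<le> (\<integral>\<^sup>+ w. ennreal ((radial_lower_bound N \<phi> \<delta> (\<lambda>n. \<epsilon> n w) \<psi>)\<^sup>2) \<partial>M)"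
proof -
  define Z where "Z w = radial_lower_bound N \<phi> \<delta> (\<lambda>n. \<epsilon> n w) \<psi>" for w
  have Z_measurable: "Z \<in> borel_measurable M"
    using assms(3) unfolding Z_def indep_vars_def
    by (intro borel_measurable_radial_lower_bound) auto
  have Z_nonneg: "0 \<le> Z w" for w
    using assms(2) by (simp add: Z_def radial_lower_bound_nonneg)
  have tail_bound: "ennreal (2 * s * (1 - s / (2 * \<delta>)) ^ N) * indicator {0..2 * \<delta>} s
      \<le> ennreal (2 * s) * emeasure M {w\<in>space M. s \<le> Z w} * indicator {0..} s" for s
  proof (cases "s \<in> {0..2 * \<delta>}")
    case True
    then have "ennreal ((1 - s / (2 * \<delta>)) ^ N) \<le> emeasure M {w\<in>space M. s \<le> Z w}"
      unfolding Z_def using assms by (intro emeasure_radial_lower_bound_ge) auto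
    then show ?thesis
      using True assms(1) by (simp add: ennreal_mult mult_left_mono)
  qed simp
  have "ennreal (8 * \<delta>\<^sup>2 / ((real N + 1) * (real N + 2)))
      = (\<integral>\<^sup>+ s. ennreal (2 * s * (1 - s / (2 * \<delta>)) ^ N) * indicator {0..2 * \<delta>} s \<partial>lborel)"
    using nn_integral_beta_moment[of "2 * \<delta>" N] assms(1) by (simp add: power2_eq_square)
  also have "\<dots> \<le> (\<integral>\<^sup>+ s. ennreal (2 * s) * emeasure M {w\<in>space M. s \<le> Z w} * indicator {0..} s \<partial>lborel)"
    by (intro nn_integral_mono tail_bound)
  also have "\<dots> = (\<integral>\<^sup>+ w. ennreal ((Z w)\<^sup>2) \<partial>M)"
    by (rule nn_integral_square_layer[symmetric, OF sigma_finite_measure_axioms Z_measurable Z_nonneg])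
  finally show ?thesis
    by (simp add: Z_def)
qed

theorem proposition3p1:
  fixes M :: "'w measure" and \<epsilon> :: "nat \<Rightarrow> 'w \<Rightarrow> real"
    and \<phi> :: "nat \<Rightarrow> 'a::euclidean_space" and \<psi> :: 'a
    and \<delta> :: real and N :: nat
  assumes "prob_space M"
    and "\<delta> > 0" and "N \<ge> 1"
    and "\<forall>n\<in>{1..N}. norm (\<phi> n) = 1" and "norm \<psi> = 1"
    and "prob_space.indep_vars M (\<lambda>_. borel) \<epsilon> {1..N}"
    and "\<forall>n\<in>{1..N}. distr M borel (\<epsilon> n) = uniform_measure lborel {-\<delta>..\<delta>}"
  shows "(\<integral>\<^sup>+ \<omega>. (radial_size N \<phi> \<delta> (\<lambda>n. \<epsilon> n \<omega>) \<psi>)\<^sup>2 \<partial>M)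
           \<ge> ennreal (8 * \<delta>\<^sup>2 / ((real N + 1) * (real N + 2)))"
proof -
  interpret prob_space M by fact
  have "ennreal (8 * \<delta>\<^sup>2 / ((real N + 1) * (real N + 2)))
      \<le> (\<integral>\<^sup>+ \<omega>. ennreal ((radial_lower_bound N \<phi> \<delta> (\<lambda>n. \<epsilon> n \<omega>) \<psi>)\<^sup>2) \<partial>M)"
    using assms(2,3,6,7) by (rule nn_integral_radial_lower_bound_square_ge)
  also have "\<dots> \<le> (\<integral>\<^sup>+ \<omega>. (radial_size N \<phi> \<delta> (\<lambda>n. \<epsilon> n \<omega>) \<psi>)\<^sup>2 \<partial>M)"
  proof (rule nn_integral_mono)
    fix \<omega>
    have "ennreal ((radial_lower_bound N \<phi> \<delta> (\<lambda>n. \<epsilon> n \<omega>) \<psi>)\<^sup>2)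
        = (ennreal (radial_lower_bound N \<phi> \<delta> (\<lambda>n. \<epsilon> n \<omega>) \<psi>))\<^sup>2"
      using assms(3) by (simp add: ennreal_power radial_lower_bound_nonneg)
    also have "\<dots> \<le> (radial_size N \<phi> \<delta> (\<lambda>n. \<epsilon> n \<omega>) \<psi>)\<^sup>2"
      using assms(3-5) by (intro power_mono radial_lower_bound_le_radial_size) auto
    finally show "ennreal ((radial_lower_bound N \<phi> \<delta> (\<lambda>n. \<epsilon> n \<omega>) \<psi>)\<^sup>2)
        \<le> (radial_size N \<phi> \<delta> (\<lambda>n. \<epsilon> n \<omega>) \<psi>)\<^sup>2" .
  qed
  finally show ?thesis .
qed

end
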